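(* Let $U$ be an $n\times n$ matrix whose entries are Laurent polynomials in $x$ over $\mathbb{C}$, such that $\det U$ is a nonzero constant (independent of $x$); then $U^{-1}$ also has Laurent polynomial entries. The following are equivalent: (i) there exist $n\times n$ matrices $T(x)$, with entries polynomial in $x$, and $S(x^{-1})$, with entries polynomial in $x^{-1}$, both having nonzero constant determinants, such that $U=T(x)\,S^{-1}(x^{-1})$; (ii) there exist $n$ column vectors $v_1(x),\dots,v_n(x)$ with entries polynomial in $x$, linearly independent over $\mathbb{C}(x)$, each satisfying $\mathrm{PP}_\infty\big(U^{-1}(x)v_i(x)\big)=0$. Moreover, when (ii) holds, taking $T$ to be the matrix with columns $v_1,\dots,v_n$ and $S=U^{-1}T$ gives a decomposition as in (i); and in any decomposition as in (i), the degree in $x$ of the entries of $T$ does not exceed the maximal power of $x$ occurring in the entries of $U$ (so the polynomial solutions $v$ of $\mathrm{PP}_\infty(U^{-1}v)=0$ relevant for (i) can be found by solving a finite linear system).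
   Context: For a Laurent polynomial (or vector/matrix of Laurent polynomials) $f(x)=\sum_k f_k x^k$, $\mathrm{PP}_\infty f$ denotes its principal part at $x=\infty$, namely $\sum_{k>0} f_k x^k$, the part containing strictly positive powers of $x$. *)

theory Defs
  imports "HOL-Computational_Algebra.Formal_Laurent_Series" "Jordan_Normal_Form.Determinant"
begin

text \<open>Laurent polynomials in x over the complex numbers are modelled as those formal
 Laurent series (type complex fls, variable x = fls_X) having only finitely many
 nonzero coefficients. (Formal Laurent series already have finitely many negative powers.)\<close>

definition laurent_poly :: "complex fls \<Rightarrow> bool" where
  "laurent_poly f \<longleftrightarrow> (\<exists>N::int. \<forall>k>N. fls_nth f k = 0)"

definition poly_in_x :: "complex fls \<Rightarrow> bool" where
  "poly_in_x f \<longleftrightarrow> laurent_poly f \<and> (\<forall>k<0. fls_nth f k = 0)"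

definition poly_in_xinv :: "complex fls \<Rightarrow> bool" where
  "poly_in_xinv f \<longleftrightarrow> (\<forall>k>0. fls_nth f k = 0)"

definition nonzero_const :: "complex fls \<Rightarrow> bool" where
  "nonzero_const f \<longleftrightarrow> (\<exists>c. c \<noteq> 0 \<and> f = fls_const c)"

definition rat_fun :: "complex fls \<Rightarrow> bool" where
  "rat_fun f \<longleftrightarrow> (\<exists>p q. poly_in_x p \<and> poly_in_x q \<and> q \<noteq> 0 \<and> f = p / q)"

definition PP_inf :: "complex fls \<Rightarrow> complex fls" where
  "PP_inf f = Abs_fls (\<lambda>k. if k > 0 then fls_nth f k else 0)"

definition PP_inf_vec :: "complex fls vec \<Rightarrow> complex fls vec" where
  "PP_inf_vec v = map_vec PP_inf v"

definition entries_satisfy :: "(complex fls \<Rightarrow> bool) \<Rightarrow> nat \<Rightarrow> complex fls mat \<Rightarrow> bool" where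
  "entries_satisfy P n M \<longleftrightarrow> M \<in> carrier_mat n n \<and> (\<forall>i<n. \<forall>j<n. P (M $$ (i,j)))"

definition lin_indep_ratfun :: "nat \<Rightarrow> (nat \<Rightarrow> complex fls vec) \<Rightarrow> bool" where
  "lin_indep_ratfun n v \<longleftrightarrow>
     (\<forall>c. (\<forall>i<n. rat_fun (c i)) \<and> (\<forall>r<n. (\<Sum>i<n. c i * v i $ r) = 0)
          \<longrightarrow> (\<forall>i<n. c i = 0))"

definition TS_decomposition :: "nat \<Rightarrow> complex fls mat \<Rightarrow> complex fls mat \<Rightarrow> complex fls mat \<Rightarrow> bool" where
  "TS_decomposition n U T S \<longleftrightarrow>
     entries_satisfy poly_in_x n T \<and> entries_satisfy poly_in_xinv n S \<and>
     nonzero_const (det T) \<and> nonzero_const (det S) \<and>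
     (\<exists>Sinv \<in> carrier_mat n n. S * Sinv = 1\<^sub>m n \<and> Sinv * S = 1\<^sub>m n \<and> U = T * Sinv)"

definition cond_ii :: "nat \<Rightarrow> complex fls mat \<Rightarrow> (nat \<Rightarrow> complex fls vec) \<Rightarrow> bool" where
  "cond_ii n Uinv v \<longleftrightarrow>
     (\<forall>i<n. v i \<in> carrier_vec n \<and> (\<forall>r<n. poly_in_x (v i $ r))) \<and>
     lin_indep_ratfun n v \<and>
     (\<forall>i<n. PP_inf_vec (Uinv *\<^sub>v v i) = 0\<^sub>v n)"

definition max_xpow :: "nat \<Rightarrow> complex fls mat \<Rightarrow> int" where
  "max_xpow n U = Max {k. \<exists>i<n. \<exists>j<n. fls_nth (U $$ (i,j)) k \<noteq> 0}"

end

theory Submission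
  imports Defs
begin

text \<open>Since \<open>det U\<close> is a nonzero constant, \<open>U\<^sup>-\<^sup>1 = adj U / det U\<close> has Laurent polynomial
  entries. If \<open>U = T S\<^sup>-\<^sup>1\<close>, then \<open>U\<^sup>-\<^sup>1 T = S\<close> has no positive powers of \<open>x\<close>, so the columns of
  the invertible matrix \<open>T\<close> satisfy (ii); and \<open>T = U S\<close> with \<open>S\<close> free of positive powers
  bounds the degree of \<open>T\<close> by the top power occurring in \<open>U\<close>. Conversely, let \<open>T\<close> have the
  columns \<open>v\<^sub>i\<close> and \<open>S = U\<^sup>-\<^sup>1 T\<close>. Then \<open>S\<close> is polynomial in \<open>x\<^sup>-\<^sup>1\<close>, \<open>det T \<noteq> 0\<close> by independence, and
  \<open>det T = det U \<cdot> det S\<close> is polynomial both in \<open>x\<close> and in \<open>x\<^sup>-\<^sup>1\<close>, hence a nonzero constant,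
  and then so is \<open>det S\<close>.\<close>

lemma fls_nth_mult_eq_0_above:
  fixes f g :: "'a::{comm_monoid_add,mult_zero} fls"
  assumes "\<forall>k>a. fls_nth f k = 0" "\<forall>k>b. fls_nth g k = 0" "k > a + b"
  shows "fls_nth (f * g) k = 0"
proof -
  have "fls_nth (f * g) k =
      (\<Sum>i=fls_subdegree f..k - fls_subdegree g. fls_nth f i * fls_nth g (k - i))"
    by (rule fls_times_nth(2))
  also have "\<dots> = 0"
  proof (rule sum.neutral, intro ballI)
    fix i
    show "fls_nth f i * fls_nth g (k - i) = 0"
    proof (cases "i > a")
      case False
      then have "k - i > b" using assms(3) by simp
      then show ?thesis using assms(2) by simp
    qed (use assms(1) in simp)
  qed
  finally show ?thesis .
qed

lemma fls_nth_mult_eq_0_below: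
  fixes f g :: "'a::{comm_monoid_add,mult_zero} fls"
  assumes "\<forall>k<a. fls_nth f k = 0" "\<forall>k<b. fls_nth g k = 0" "k < a + b"
  shows "fls_nth (f * g) k = 0"
proof (cases "f = 0 \<or> g = 0")
  case False
  then have "a \<le> fls_subdegree f" "b \<le> fls_subdegree g"
    using assms by (auto intro!: fls_subdegree_geI)
  then show ?thesis using assms(3) by (intro fls_times_nth_eq0) simp
qed auto

definition ring_closed :: "('a::comm_ring_1 \<Rightarrow> bool) \<Rightarrow> bool" where
  "ring_closed P \<longleftrightarrow> P 0 \<and> P 1 \<and> (\<forall>a. P a \<longrightarrow> P (- a)) \<and>
     (\<forall>a b. P a \<longrightarrow> P b \<longrightarrow> P (a + b) \<and> P (a * b))"

lemma ring_closedI: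
  assumes "P 0" "P 1" "\<And>a. P a \<Longrightarrow> P (- a)"
    "\<And>a b. P a \<Longrightarrow> P b \<Longrightarrow> P (a + b)" "\<And>a b. P a \<Longrightarrow> P b \<Longrightarrow> P (a * b)"
  shows "ring_closed P"
  using assms unfolding ring_closed_def by blast

lemma ring_closedD:
  assumes "ring_closed P"
  shows "P 0" "P 1" "P a \<Longrightarrow> P (- a)"
    "P a \<Longrightarrow> P b \<Longrightarrow> P (a + b)" "P a \<Longrightarrow> P b \<Longrightarrow> P (a * b)"
  using assms unfolding ring_closed_def by blast+

lemma ring_closed_sum:
  assumes "ring_closed P" "\<And>x. x \<in> A \<Longrightarrow> P (f x)"
  shows "P (sum f A)"
  using assms(2) by (induction A rule: infinite_finite_induct) (simp_all add: ring_closedD[OF assms(1)])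

lemma ring_closed_prod:
  assumes "ring_closed P" "\<And>x. x \<in> A \<Longrightarrow> P (f x)"
  shows "P (prod f A)"
  using assms(2) by (induction A rule: infinite_finite_induct) (simp_all add: ring_closedD[OF assms(1)])

lemma ring_closed_det:
  assumes P: "ring_closed P" and A: "A \<in> carrier_mat n n"
    and entries: "\<forall>i<n. \<forall>j<n. P (A $$ (i,j))"
  shows "P (det A)"
proof -
  have sign: "P (signof p)" for p :: "nat \<Rightarrow> nat"
    by (cases p rule: sign_cases) (simp_all add: ring_closedD[OF P])
  show ?thesis unfolding det_def'[OF A]
  proof (rule ring_closed_sum[OF P])
    fix p assume "p \<in> {p. p permutes {0..<n}}"
    then have "\<And>i. i \<in> {0..<n} \<Longrightarrow> p i < n" by (auto dest: permutes_in_image)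
    then show "P (signof p * (\<Prod>i = 0..<n. A $$ (i, p i)))"
      using entries by (intro ring_closedD(5)[OF P] sign ring_closed_prod[OF P]) auto
  qed
qed

lemma ring_closed_adj_mat:
  assumes P: "ring_closed P" and A: "A \<in> carrier_mat n n"
    and entries: "\<forall>i<n. \<forall>j<n. P (A $$ (i,j))" and "i < n" "j < n"
  shows "P (adj_mat A $$ (i,j))"
proof -
  have sign: "P ((-1) ^ k)" for k
    by (induction k) (auto intro: ring_closedD[OF P])
  have "\<forall>a<n-1. \<forall>b<n-1. P (mat_delete A j i $$ (a,b))"
    using A entries by (auto simp: mat_delete_def)
  then have "P (det (mat_delete A j i))"
    by (intro ring_closed_det[OF P mat_delete_carrier[OF A]])
  moreover have "adj_mat A $$ (i,j) = (-1)^(j+i) * det (mat_delete A j i)"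
    using A assms(4,5) by (simp add: adj_mat_def cofactor_def)
  ultimately show ?thesis using sign ring_closedD(5)[OF P] by simp
qed

lemma ring_closed_laurent_poly: "ring_closed laurent_poly"
proof (rule ring_closedI)
  show "laurent_poly 0" "laurent_poly 1"
    unfolding laurent_poly_def by (auto intro: exI[of _ 0])
next
  fix f assume "laurent_poly f"
  then show "laurent_poly (- f)" unfolding laurent_poly_def by auto
next
  fix f g assume "laurent_poly f" "laurent_poly g"
  then obtain a b where ab: "\<forall>k>a. fls_nth f k = 0" "\<forall>k>b. fls_nth g k = 0"
    unfolding laurent_poly_def by blast
  then show "laurent_poly (f + g)"
    unfolding laurent_poly_def by (intro exI[of _ "max a b"]) simp
  show "laurent_poly (f * g)"
    unfolding laurent_poly_def using fls_nth_mult_eq_0_above[OF ab] by blast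
qed

lemma ring_closed_poly_in_x: "ring_closed poly_in_x"
proof (rule ring_closedI)
  show "poly_in_x 0" "poly_in_x 1"
    unfolding poly_in_x_def using ring_closedD[OF ring_closed_laurent_poly] by auto
next
  fix f assume "poly_in_x f"
  then show "poly_in_x (- f)"
    unfolding poly_in_x_def using ring_closedD[OF ring_closed_laurent_poly] by auto
next
  fix f g assume "poly_in_x f" "poly_in_x g"
  then show "poly_in_x (f + g)" "poly_in_x (f * g)"
    unfolding poly_in_x_def
    using ring_closedD[OF ring_closed_laurent_poly] fls_nth_mult_eq_0_below[of 0 f 0 g] by auto
qed

lemma ring_closed_poly_in_xinv: "ring_closed poly_in_xinv"
proof (rule ring_closedI)
  fix f g assume "poly_in_xinv f" "poly_in_xinv g"
  then show "poly_in_xinv (f * g)"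
    unfolding poly_in_xinv_def using fls_nth_mult_eq_0_above[of 0 f 0 g] by auto
qed (auto simp: poly_in_xinv_def)

lemma fls_eq_const_if_poly_in_x_poly_in_xinv:
  assumes "poly_in_x f" "poly_in_xinv f"
  shows "f = fls_const (fls_nth f 0)"
  using assms unfolding poly_in_x_def poly_in_xinv_def by (intro fls_eqI) (auto simp: neq_iff)

lemma nonzero_const_mult: "nonzero_const f \<Longrightarrow> nonzero_const g \<Longrightarrow> nonzero_const (f * g)"
  unfolding nonzero_const_def by (metis fls_const_mult_const mult_eq_0_iff)

lemma nonzero_const_inverse: "nonzero_const f \<Longrightarrow> nonzero_const (inverse f)"
  unfolding nonzero_const_def by (metis fls_inverse_const inverse_nonzero_iff_nonzero)

definition fls_of_poly :: "'a::comm_ring_1 poly \<Rightarrow> 'a fls" where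
  "fls_of_poly p = fps_to_fls (fps_of_poly p)"

lemma fls_nth_fls_of_poly: "fls_nth (fls_of_poly p) k = (if k < 0 then 0 else coeff p (nat k))"
  unfolding fls_of_poly_def by simp

lemma inj_comm_ring_hom_fls_of_poly: "inj_comm_ring_hom (fls_of_poly :: 'a::comm_ring_1 poly \<Rightarrow> _)"
  by unfold_locales (auto simp: fls_of_poly_def fps_of_poly_add fps_of_poly_mult
      fls_times_fps_to_fls fps_of_poly_eq_iff[of _ 0, simplified])

lemma poly_in_x_iff_fls_of_poly: "poly_in_x f \<longleftrightarrow> (\<exists>p. f = fls_of_poly p)"
proof
  assume "poly_in_x f"
  then obtain N where N: "\<forall>k>N. fls_nth f k = 0" "\<forall>k<0. fls_nth f k = 0"
    unfolding poly_in_x_def laurent_poly_def by auto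
  define p where "p = Abs_poly (\<lambda>i. if i \<le> nat N then fls_nth f (int i) else 0)"
  have "f = fls_of_poly p"
    using N by (intro fls_eqI) (auto simp: fls_nth_fls_of_poly p_def coeff_Abs_poly_If_le)
  then show "\<exists>p. f = fls_of_poly p" ..
next
  assume "\<exists>p. f = fls_of_poly p"
  then obtain p where f: "f = fls_of_poly p" ..
  show "poly_in_x f"
    unfolding f poly_in_x_def laurent_poly_def fls_nth_fls_of_poly
    by (intro conjI exI[of _ "int (degree p)"]) (auto simp: coeff_eq_0)
qed

lemma rat_fun_if_poly_in_x: "poly_in_x f \<Longrightarrow> rat_fun f"
  unfolding rat_fun_def by (rule exI[of _ f], rule exI[of _ 1]) (simp add: ring_closedD[OF ring_closed_poly_in_x])

lemma PP_inf_nth: "fls_nth (PP_inf f) k = (if k > 0 then fls_nth f k else 0)"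
  unfolding PP_inf_def by (rule nth_Abs_fls_lower_bound[of 0]) auto

lemma PP_inf_eq_0_iff: "PP_inf f = 0 \<longleftrightarrow> poly_in_xinv f"
  unfolding poly_in_xinv_def fls_eq_iff[of "PP_inf f"] PP_inf_nth by auto

lemma PP_inf_vec_eq_0_iff:
  "v \<in> carrier_vec n \<Longrightarrow> PP_inf_vec v = 0\<^sub>v n \<longleftrightarrow> (\<forall>r<n. poly_in_xinv (v $ r))"
  unfolding PP_inf_vec_def by (auto simp: vec_eq_iff PP_inf_eq_0_iff)

lemma laurent_poly_finite_support:
  assumes "laurent_poly f"
  shows "finite {k. fls_nth f k \<noteq> 0}"
proof -
  obtain N where N: "\<forall>k>N. fls_nth f k = 0" using assms unfolding laurent_poly_def by auto
  obtain L where L: "\<forall>k<L. fls_nth f k = 0" by (elim fls_nth_vanishes_belowE)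
  have "{k. fls_nth f k \<noteq> 0} \<subseteq> {L..N}" using N L by (auto simp: not_less[symmetric])
  then show ?thesis by (rule finite_subset) simp
qed

lemma fls_nth_eq_0_above_max_xpow:
  assumes U: "entries_satisfy laurent_poly n U" and "i < n" "j < n" "k > max_xpow n U"
  shows "fls_nth (U $$ (i,j)) k = 0"
proof (rule ccontr)
  let ?K = "{k. \<exists>i<n. \<exists>j<n. fls_nth (U $$ (i,j)) k \<noteq> 0}"
  have "?K = (\<Union>i<n. \<Union>j<n. {k. fls_nth (U $$ (i,j)) k \<noteq> 0})" by auto
  then have "finite ?K"
    using U laurent_poly_finite_support unfolding entries_satisfy_def by auto
  moreover assume "fls_nth (U $$ (i,j)) k \<noteq> 0"
  then have "k \<in> ?K" using assms(2,3) by auto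
  ultimately have "k \<le> max_xpow n U" unfolding max_xpow_def by (rule Max_ge)
  with assms(4) show False by simp
qed

lemma fls_nth_mult_mat_eq_0_above:
  fixes A B :: "'a::comm_ring_1 fls mat"
  assumes A: "A \<in> carrier_mat n m" and B: "B \<in> carrier_mat m p" and "i < n" "j < p"
    and "\<forall>l<m. \<forall>k>a. fls_nth (A $$ (i,l)) k = 0" and "\<forall>l<m. \<forall>k>b. fls_nth (B $$ (l,j)) k = 0"
    and "k > a + b"
  shows "fls_nth ((A * B) $$ (i,j)) k = 0"
proof -
  have "(A * B) $$ (i,j) = (\<Sum>l<m. A $$ (i,l) * B $$ (l,j))"
    using assms(1-4) by (auto simp: scalar_prod_def lessThan_atLeast0 intro!: sum.cong)
  then show ?thesis
    using assms(5-7)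
    by (auto simp: fls_nth_sum intro!: sum.neutral fls_nth_mult_eq_0_above[where a = a and b = b])
qed

lemma det_inverse_mat:
  fixes A B :: "'a::field mat"
  assumes "A \<in> carrier_mat n n" "B \<in> carrier_mat n n" "A * B = 1\<^sub>m n"
  shows "det B = inverse (det A)"
  using det_mult[OF assms(1,2)] assms(3) by (metis det_one inverse_unique)

lemma inverse_mat_eq_adj_mat:
  fixes A B :: "'a::field mat"
  assumes A: "A \<in> carrier_mat n n" and B: "B \<in> carrier_mat n n" and AB: "A * B = 1\<^sub>m n"
  shows "B = inverse (det A) \<cdot>\<^sub>m adj_mat A"
proof -
  have adj: "adj_mat A \<in> carrier_mat n n" using adj_mat(1)[OF A] .
  have dA: "det A \<noteq> 0" using det_inverse_mat[OF assms] det_mult[OF A B] AB by auto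
  have "adj_mat A = adj_mat A * (A * B)" using adj AB by simp
  also have "\<dots> = (adj_mat A * A) * B" using adj A B by (simp add: assoc_mult_mat)
  also have "\<dots> = det A \<cdot>\<^sub>m B"
    using adj_mat(3)[OF A] B by (simp add: mult_smult_assoc_mat[OF one_carrier_mat B])
  finally show ?thesis using dA by (auto intro!: eq_matI)
qed

lemma det_neq_0_imp_inverse_mat:
  fixes A :: "'a::field mat"
  assumes "A \<in> carrier_mat n n" "det A \<noteq> 0"
  obtains B where "B \<in> carrier_mat n n" "A * B = 1\<^sub>m n" "B * A = 1\<^sub>m n"
  using det_non_zero_imp_unit[OF assms] unfolding Units_def ring_mat_def by auto

lemma lin_indep_ratfun_cong:
  assumes "\<And>i. i < n \<Longrightarrow> v i = w i"
  shows "lin_indep_ratfun n v = lin_indep_ratfun n w"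
proof -
  have "(\<Sum>i<n. c i * v i $ r) = (\<Sum>i<n. c i * w i $ r)" for c r
    using assms by (intro sum.cong) auto
  then show ?thesis unfolding lin_indep_ratfun_def by simp
qed

lemma lin_indep_ratfun_col_iff:
  assumes T: "T \<in> carrier_mat n n"
  shows "lin_indep_ratfun n (col T) \<longleftrightarrow>
    (\<forall>w \<in> carrier_vec n. (\<forall>i<n. rat_fun (w $ i)) \<and> T *\<^sub>v w = 0\<^sub>v n \<longrightarrow> w = 0\<^sub>v n)"
proof -
  have kernel: "T *\<^sub>v vec n c = 0\<^sub>v n \<longleftrightarrow> (\<forall>r<n. (\<Sum>i<n. c i * col T i $ r) = 0)" for c
  proof -
    have "(T *\<^sub>v vec n c) $ r = (\<Sum>i<n. c i * col T i $ r)" if "r < n" for r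
      using that T by (auto simp: scalar_prod_def lessThan_atLeast0 mult.commute intro!: sum.cong)
    then show ?thesis using T by (auto simp: vec_eq_iff)
  qed
  show ?thesis
  proof
    assume indep: "lin_indep_ratfun n (col T)"
    show "\<forall>w \<in> carrier_vec n. (\<forall>i<n. rat_fun (w $ i)) \<and> T *\<^sub>v w = 0\<^sub>v n \<longrightarrow> w = 0\<^sub>v n"
    proof (intro ballI impI)
      fix w assume w: "w \<in> carrier_vec n" and hw: "(\<forall>i<n. rat_fun (w $ i)) \<and> T *\<^sub>v w = 0\<^sub>v n"
      have "w = vec n (($) w)" using w by (auto intro!: eq_vecI)
      then have "\<forall>i<n. w $ i = 0"
        using indep[unfolded lin_indep_ratfun_def, rule_format, of "($) w"] hw kernel[of "($) w"]
        by metis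
      then show "w = 0\<^sub>v n" using w by (auto intro!: eq_vecI)
    qed
  next
    assume trivial: "\<forall>w \<in> carrier_vec n. (\<forall>i<n. rat_fun (w $ i)) \<and> T *\<^sub>v w = 0\<^sub>v n \<longrightarrow> w = 0\<^sub>v n"
    show "lin_indep_ratfun n (col T)" unfolding lin_indep_ratfun_def
    proof (intro allI impI)
      fix c i assume c: "(\<forall>i<n. rat_fun (c i)) \<and> (\<forall>r<n. (\<Sum>i<n. c i * col T i $ r) = 0)"
        and i: "i < n"
      have "vec n c = 0\<^sub>v n" using trivial c kernel[of c] by auto
      then show "c i = 0" using i by (metis index_vec index_zero_vec(1))
    qed
  qed
qed

text \<open>Pulling \<open>T\<close> back to a matrix over \<open>\<complex>[x]\<close> shows that a singular \<open>T\<close> has a polynomial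
  kernel vector, so independence over \<open>\<complex>(x)\<close> is only needed for polynomial coefficients.\<close>

lemma det_neq_0_if_no_poly_kernel:
  assumes T: "T \<in> carrier_mat n n" and entries: "\<forall>i<n. \<forall>j<n. poly_in_x (T $$ (i,j))"
    and kernel: "\<And>w. w \<in> carrier_vec n \<Longrightarrow> \<forall>i<n. poly_in_x (w $ i) \<Longrightarrow> T *\<^sub>v w = 0\<^sub>v n \<Longrightarrow> w = 0\<^sub>v n"
  shows "det T \<noteq> 0"
proof
  assume dT: "det T = 0"
  interpret h: inj_comm_ring_hom "fls_of_poly :: complex poly \<Rightarrow> _"
    by (rule inj_comm_ring_hom_fls_of_poly)
  define P where "P = mat n n (\<lambda>(i,j). SOME p. T $$ (i,j) = fls_of_poly p)"
  have P: "P \<in> carrier_mat n n" unfolding P_def by simp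
  have PT: "map_mat fls_of_poly P = T"
  proof (rule eq_matI)
    fix i j assume "i < dim_row T" "j < dim_col T"
    then have ij: "i < n" "j < n" using T by auto
    then have "\<exists>p. T $$ (i,j) = fls_of_poly p" using entries poly_in_x_iff_fls_of_poly by blast
    then have "T $$ (i,j) = fls_of_poly (SOME p. T $$ (i,j) = fls_of_poly p)" by (rule someI_ex)
    then show "map_mat fls_of_poly P $$ (i,j) = T $$ (i,j)" using ij P unfolding P_def by simp
  qed (use P T in auto)
  then have "det P = 0" using dT h.hom_det by (metis h.hom_0_iff)
  then obtain w where w: "w \<in> carrier_vec n" "w \<noteq> 0\<^sub>v n" "P *\<^sub>v w = 0\<^sub>v n"
    using det_0_iff_vec_prod_zero[OF P] by auto
  have "T *\<^sub>v map_vec fls_of_poly w = map_vec fls_of_poly (P *\<^sub>v w)"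
    using h.mult_mat_vec_hom[OF P w(1)] PT by simp
  also have "\<dots> = 0\<^sub>v n" using w(3) h.vec_hom_zero by simp
  finally have "map_vec fls_of_poly w = map_vec fls_of_poly (0\<^sub>v n)"
    using kernel[of "map_vec fls_of_poly w"] w(1) poly_in_x_iff_fls_of_poly h.vec_hom_zero by auto
  then show False using w(2) h.vec_hom_inj by blast
qed

lemma laurent_poly_inverse_mat:
  assumes U: "entries_satisfy laurent_poly n U" and "nonzero_const (det U)"
    and "Uinv \<in> carrier_mat n n" "U * Uinv = 1\<^sub>m n"
  shows "entries_satisfy laurent_poly n Uinv"
proof -
  have U_carrier: "U \<in> carrier_mat n n" using U unfolding entries_satisfy_def by auto
  have "laurent_poly (inverse (det U))"
    using assms(2) unfolding nonzero_const_def laurent_poly_def by (auto simp: fls_inverse_const)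
  moreover have "laurent_poly (adj_mat U $$ (i,j))" if "i < n" "j < n" for i j
    using U that unfolding entries_satisfy_def by (intro ring_closed_adj_mat[OF ring_closed_laurent_poly]) auto
  ultimately show ?thesis
    unfolding entries_satisfy_def inverse_mat_eq_adj_mat[OF U_carrier assms(3,4)]
    using U_carrier adj_mat(1)[OF U_carrier] ring_closedD(5)[OF ring_closed_laurent_poly] by simp
qed

lemma TS_decomposition_mult_eq:
  assumes "TS_decomposition n U T S"
  shows "U * S = T"
proof -
  obtain Sinv where "T \<in> carrier_mat n n" "S \<in> carrier_mat n n" "Sinv \<in> carrier_mat n n"
    and "Sinv * S = 1\<^sub>m n" "U = T * Sinv"
    using assms unfolding TS_decomposition_def entries_satisfy_def by blast
  then show ?thesis by (simp add: assoc_mult_mat)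
qed

lemma TS_decomposition_imp_cond_ii:
  assumes U: "U \<in> carrier_mat n n" and Uinv: "Uinv \<in> carrier_mat n n" "Uinv * U = 1\<^sub>m n"
    and TS: "TS_decomposition n U T S"
  shows "cond_ii n Uinv (col T)"
proof -
  have T: "T \<in> carrier_mat n n" and T_poly: "\<forall>i<n. \<forall>j<n. poly_in_x (T $$ (i,j))"
    and S: "S \<in> carrier_mat n n" and S_poly: "\<forall>i<n. \<forall>j<n. poly_in_xinv (S $$ (i,j))"
    and "det T \<noteq> 0"
    using TS unfolding TS_decomposition_def entries_satisfy_def nonzero_const_def by auto
  have "Uinv * T = (Uinv * U) * S"
    using TS_decomposition_mult_eq[OF TS] assoc_mult_mat[OF Uinv(1) U S] by simp
  then have UinvT: "Uinv * T = S" using Uinv(2) S by simp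
  obtain Tinv where Tinv: "Tinv \<in> carrier_mat n n" "Tinv * T = 1\<^sub>m n"
    using det_neq_0_imp_inverse_mat[OF T \<open>det T \<noteq> 0\<close>] by metis
  have "lin_indep_ratfun n (col T)"
    unfolding lin_indep_ratfun_col_iff[OF T]
  proof (intro ballI impI)
    fix w assume w: "w \<in> carrier_vec n" and "(\<forall>i<n. rat_fun (w $ i)) \<and> T *\<^sub>v w = 0\<^sub>v n"
    then have "Tinv *\<^sub>v (T *\<^sub>v w) = 0\<^sub>v n" using Tinv(1) by (auto intro!: eq_vecI)
    then show "w = 0\<^sub>v n" using Tinv T w by (simp add: assoc_mult_mat_vec[symmetric])
  qed
  moreover have "PP_inf_vec (Uinv *\<^sub>v col T i) = 0\<^sub>v n" if "i < n" for i
  proof -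
    have "Uinv *\<^sub>v col T i = col S i" using col_mult2[OF Uinv(1) T that] UinvT by simp
    then show ?thesis
      using carrier_matD[OF S] S_poly that by (auto simp: PP_inf_vec_eq_0_iff)
  qed
  ultimately show ?thesis unfolding cond_ii_def using T T_poly by auto
qed

lemma TS_decomposition_degree_bound:
  assumes U: "entries_satisfy laurent_poly n U" and TS: "TS_decomposition n U T S"
    and "i < n" "j < n" and "fls_nth (T $$ (i,j)) k \<noteq> 0"
  shows "k \<le> max_xpow n U"
proof (rule ccontr)
  assume "\<not> k \<le> max_xpow n U"
  have "S \<in> carrier_mat n n" "\<forall>l<n. \<forall>k>0. fls_nth (S $$ (l,j)) k = 0"
    using TS \<open>j < n\<close> unfolding TS_decomposition_def entries_satisfy_def poly_in_xinv_def by auto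
  moreover have "U \<in> carrier_mat n n" using U unfolding entries_satisfy_def by simp
  ultimately have "fls_nth ((U * S) $$ (i,j)) k = 0"
    using fls_nth_eq_0_above_max_xpow[OF U \<open>i < n\<close>] \<open>\<not> k \<le> max_xpow n U\<close> \<open>i < n\<close> \<open>j < n\<close>
    by (intro fls_nth_mult_mat_eq_0_above[where a = "max_xpow n U" and b = 0]) auto
  then show False using assms(5) TS_decomposition_mult_eq[OF TS] by simp
qed

lemma nonzero_const_if_poly_in_x_eq_const_mult_poly_in_xinv:
  assumes f: "poly_in_x f" and g: "poly_in_xinv g" and c: "nonzero_const c"
    and "f = c * g" "f \<noteq> 0"
  shows "nonzero_const f" "nonzero_const g"
proof -
  have "poly_in_xinv c" "c \<noteq> 0" using c unfolding nonzero_const_def poly_in_xinv_def by auto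
  then have "poly_in_xinv f" using g \<open>f = c * g\<close> ring_closedD(5)[OF ring_closed_poly_in_xinv] by simp
  then have "f = fls_const (fls_nth f 0)" using f by (rule fls_eq_const_if_poly_in_x_poly_in_xinv[rotated])
  with \<open>f \<noteq> 0\<close> show "nonzero_const f" unfolding nonzero_const_def by (metis fls_const_0)
  moreover have "g = inverse c * f" using \<open>c \<noteq> 0\<close> \<open>f = c * g\<close> by simp
  ultimately show "nonzero_const g" using c by (simp add: nonzero_const_mult nonzero_const_inverse)
qed

lemma TS_decomposition_if_inverse_mult_eq:
  assumes U: "U \<in> carrier_mat n n" and Uinv: "Uinv \<in> carrier_mat n n" "U * Uinv = 1\<^sub>m n"
    and T: "entries_satisfy poly_in_x n T" and S: "entries_satisfy poly_in_xinv n S"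
    and "nonzero_const (det T)" "nonzero_const (det S)" and S_eq: "Uinv * T = S"
  shows "TS_decomposition n U T S"
proof -
  have T_carrier: "T \<in> carrier_mat n n" and S_carrier: "S \<in> carrier_mat n n"
    using T S unfolding entries_satisfy_def by auto
  have "det T \<noteq> 0" using \<open>nonzero_const (det T)\<close> unfolding nonzero_const_def by auto
  then obtain Tinv where Tinv: "Tinv \<in> carrier_mat n n" "T * Tinv = 1\<^sub>m n" "Tinv * T = 1\<^sub>m n"
    using det_neq_0_imp_inverse_mat[OF T_carrier] by metis
  define Sinv where "Sinv = Tinv * U"
  have Sinv: "Sinv \<in> carrier_mat n n" unfolding Sinv_def using Tinv(1) U by simp
  have "Sinv * S = Tinv * (U * (Uinv * T))"
    unfolding Sinv_def S_eq[symmetric]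
    using assoc_mult_mat[OF Tinv(1) U mult_carrier_mat[OF Uinv(1) T_carrier]] .
  also have "\<dots> = Tinv * ((U * Uinv) * T)" using assoc_mult_mat[OF U Uinv(1) T_carrier] by simp
  finally have SinvS: "Sinv * S = 1\<^sub>m n" using Uinv(2) T_carrier Tinv(3) by simp
  have "T * Sinv = (T * Tinv) * U"
    unfolding Sinv_def using T_carrier Tinv(1) U by (simp add: assoc_mult_mat)
  then have "U = T * Sinv" using Tinv(2) U by simp
  then show ?thesis
    unfolding TS_decomposition_def using assms(4-7) Sinv SinvS
      mat_mult_left_right_inverse[OF Sinv S_carrier SinvS] by blast
qed

lemma cond_ii_imp_TS_decomposition:
  assumes U: "U \<in> carrier_mat n n" and dU: "nonzero_const (det U)"
    and Uinv: "Uinv \<in> carrier_mat n n" "U * Uinv = 1\<^sub>m n"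
    and v: "cond_ii n Uinv v"
  shows "TS_decomposition n U (mat_of_cols n (map v [0..<n])) (Uinv * mat_of_cols n (map v [0..<n]))"
proof -
  define T where "T = mat_of_cols n (map v [0..<n])"
  define S where "S = Uinv * T"
  have v_carrier: "\<forall>i<n. v i \<in> carrier_vec n \<and> (\<forall>r<n. poly_in_x (v i $ r))"
    and indep: "lin_indep_ratfun n v" and PP: "\<forall>i<n. PP_inf_vec (Uinv *\<^sub>v v i) = 0\<^sub>v n"
    using v unfolding cond_ii_def by auto
  have T: "T \<in> carrier_mat n n" unfolding T_def using mat_of_cols_carrier(1)[of n "map v [0..<n]"] by simp
  have col_T: "col T i = v i" if "i < n" for i unfolding T_def using that v_carrier by simp
  have T_poly: "\<forall>i<n. \<forall>j<n. poly_in_x (T $$ (i,j))"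
    using v_carrier T_def by (simp add: mat_of_cols_index)
  have S: "S \<in> carrier_mat n n" unfolding S_def using Uinv T by simp
  have S_poly: "\<forall>i<n. \<forall>j<n. poly_in_xinv (S $$ (i,j))"
  proof (intro allI impI)
    fix r i assume "r < n" "i < n"
    then have "S $$ (r,i) = (Uinv *\<^sub>v v i) $ r"
      using col_mult2[OF Uinv(1) T \<open>i < n\<close>] col_T S unfolding S_def by (metis carrier_matD index_col)
    then show "poly_in_xinv (S $$ (r,i))"
      using PP \<open>r < n\<close> \<open>i < n\<close> Uinv(1) v_carrier by (auto simp: PP_inf_vec_eq_0_iff)
  qed
  have "det T \<noteq> 0"
  proof (rule det_neq_0_if_no_poly_kernel[OF T T_poly])
    have "lin_indep_ratfun n (col T)" using indep lin_indep_ratfun_cong[of n "col T" v] col_T by simp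
    then show "w = 0\<^sub>v n" if "w \<in> carrier_vec n" "\<forall>i<n. poly_in_x (w $ i)" "T *\<^sub>v w = 0\<^sub>v n"
      for w :: "complex fls vec"
      using that rat_fun_if_poly_in_x unfolding lin_indep_ratfun_col_iff[OF T] by blast
  qed
  have "det S = inverse (det U) * det T"
    unfolding S_def det_mult[OF Uinv(1) T] det_inverse_mat[OF U Uinv(1,2)] ..
  moreover have "det U \<noteq> 0" using dU unfolding nonzero_const_def by auto
  ultimately have "det T = det U * det S" by simp
  then have "nonzero_const (det T)" "nonzero_const (det S)"
    using ring_closed_det[OF ring_closed_poly_in_x T T_poly] ring_closed_det[OF ring_closed_poly_in_xinv S S_poly]
      dU \<open>det T \<noteq> 0\<close>
    by (auto intro: nonzero_const_if_poly_in_x_eq_const_mult_poly_in_xinv)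
  then have "TS_decomposition n U T S"
    using T T_poly S S_poly
    by (intro TS_decomposition_if_inverse_mult_eq[OF U Uinv]) (auto simp: entries_satisfy_def S_def)
  then show ?thesis unfolding T_def S_def .
qed

theorem mainTheorem4:
  fixes n :: nat and U Uinv :: "complex fls mat"
  assumes "entries_satisfy laurent_poly n U"
    and "nonzero_const (det U)"
    and "Uinv \<in> carrier_mat n n" and "U * Uinv = 1\<^sub>m n" and "Uinv * U = 1\<^sub>m n"
  shows "entries_satisfy laurent_poly n Uinv
    \<and> ((\<exists>T S. TS_decomposition n U T S) \<longleftrightarrow> (\<exists>v. cond_ii n Uinv v))
    \<and> (\<forall>v. cond_ii n Uinv v \<longrightarrow>
          TS_decomposition n U (mat_of_cols n (map v [0..<n])) (Uinv * mat_of_cols n (map v [0..<n])))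
    \<and> (\<forall>T S. TS_decomposition n U T S \<longrightarrow>
          (\<forall>i<n. \<forall>j<n. \<forall>k. fls_nth (T $$ (i,j)) k \<noteq> 0 \<longrightarrow> k \<le> max_xpow n U))"
proof -
  have U: "U \<in> carrier_mat n n" using assms(1) unfolding entries_satisfy_def by simp
  have ii_i: "\<forall>v. cond_ii n Uinv v \<longrightarrow>
      TS_decomposition n U (mat_of_cols n (map v [0..<n])) (Uinv * mat_of_cols n (map v [0..<n]))"
    using cond_ii_imp_TS_decomposition[OF U assms(2-4)] by blast
  have i_ii: "cond_ii n Uinv (col T)" if "TS_decomposition n U T S" for T S
    using TS_decomposition_imp_cond_ii[OF U assms(3,5) that] .
  show ?thesis
    using laurent_poly_inverse_mat[OF assms(1-4)] ii_i i_ii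
      TS_decomposition_degree_bound[OF assms(1)] by blast
qed

end
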